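(* Let $T\in S(\lambda)$ be a standard Young tableau with entries $a_{ij}$. Then $$\chi^T(q)=\sum_k |S_k^T(\lambda)|q^k=\prod_{i,j}[\mathrm{dep}(a_{ij})+1]_q .$$
   Context: A shape $\lambda=(\lambda_1\ge\dots\ge\lambda_m\ge1)$ has $\lambda_i$ left-justified boxes in row $i$ (rows top to bottom, columns left to right); $N=\sum\lambda_i$. $S(\lambda)$ is the set of standard Young tableaux: fillings with $1,\dots,N$, each once, strictly increasing along rows and down columns. A row-standard filling of shape $\lambda$ uses $1,\dots,N$ each once with rows strictly increasing. Inversion pairs of a row-standard filling $\tau$: for a box $c$ and $r\ge1$ let $c^{(r)}$ be the box $r$ positions to its right, if it exists. For distinct boxes $c,c'$ in the same column with $\tau(c)<\tau(c')$, let $r\ge1$ be least such that one of $c^{(r)},c'^{(r)}$ does not exist or $\tau(c^{(r)})\neq\tau(c'^{(r)})$; $(c,c')$ is an inversion pair if either (one of them does not exist and $c$ lies below $c'$) or (both exist and $\tau(c^{(r)})>\tau(c'^{(r)})$). $S_k(\lambda)$ = row-standard fillings with exactly $k$ inversion pairs. $\mathrm{st}(\tau)$ = filling obtained by sorting each column increasingly (a standard Young tableau); $S_k^T(\lambda)=\{\tau\in S_k(\lambda):\mathrm{st}(\tau)=T\}$. For the entry $a_{ij}$ of $T$ in column $j$ with value $v$: $\mathrm{dep}(a_{ij})$ = (number of entries of column $j$ smaller than $v$) minus (number of entries of column $j+1$ smaller than $v$, or $0$ if there is no column $j+1$). $[p]_q=1+q+\dots+q^{p-1}$. *)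

theory Defs
  imports Main "HOL-Computational_Algebra.Polynomial"
begin

text \<open>A shape is a list of row lengths (weakly decreasing, all positive).
  Boxes are indexed 0-based as (row, column).\<close>

definition is_shape :: "nat list \<Rightarrow> bool" where
  "is_shape lam \<longleftrightarrow> sorted_wrt (\<ge>) lam \<and> 0 \<notin> set lam"

definition boxes :: "nat list \<Rightarrow> (nat \<times> nat) set" where
  "boxes lam = {(i, j). i < length lam \<and> j < lam ! i}"

definition size_sh :: "nat list \<Rightarrow> nat" where
  "size_sh lam = sum_list lam"

text \<open>A filling uses 1..N each once on the boxes; outside the boxes it is 0
  (so that fillings are determined by their values on the boxes).\<close>

definition is_filling :: "nat list \<Rightarrow> (nat \<times> nat \<Rightarrow> nat) \<Rightarrow> bool" where
  "is_filling lam tau \<longleftrightarrow> bij_betw tau (boxes lam) {1..size_sh lam}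
     \<and> (\<forall>c. c \<notin> boxes lam \<longrightarrow> tau c = 0)"

definition row_standard :: "nat list \<Rightarrow> (nat \<times> nat \<Rightarrow> nat) \<Rightarrow> bool" where
  "row_standard lam tau \<longleftrightarrow> is_filling lam tau \<and>
     (\<forall>i j. (i, Suc j) \<in> boxes lam \<longrightarrow> tau (i, j) < tau (i, Suc j))"

definition SYT :: "nat list \<Rightarrow> (nat \<times> nat \<Rightarrow> nat) set" where
  "SYT lam = {T. row_standard lam T \<and>
     (\<forall>i j. (Suc i, j) \<in> boxes lam \<longrightarrow> T (i, j) < T (Suc i, j))}"

definition shift :: "nat \<times> nat \<Rightarrow> nat \<Rightarrow> nat \<times> nat" where
  "shift c r = (fst c, snd c + r)"

definition inv_pairs :: "nat list \<Rightarrow> (nat \<times> nat \<Rightarrow> nat) \<Rightarrow> ((nat \<times> nat) \<times> (nat \<times> nat)) set" where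
  "inv_pairs lam tau = {(c, c'). c \<in> boxes lam \<and> c' \<in> boxes lam \<and> c \<noteq> c' \<and>
     snd c = snd c' \<and> tau c < tau c' \<and>
     (let r = (LEAST r. r \<ge> 1 \<and> (shift c r \<notin> boxes lam \<or> shift c' r \<notin> boxes lam
                        \<or> tau (shift c r) \<noteq> tau (shift c' r)))
      in ((shift c r \<notin> boxes lam \<or> shift c' r \<notin> boxes lam) \<and> fst c > fst c')
         \<or> (shift c r \<in> boxes lam \<and> shift c' r \<in> boxes lam
            \<and> tau (shift c r) > tau (shift c' r)))}"

definition inv_count :: "nat list \<Rightarrow> (nat \<times> nat \<Rightarrow> nat) \<Rightarrow> nat" where
  "inv_count lam tau = card (inv_pairs lam tau)"

definition st :: "nat list \<Rightarrow> (nat \<times> nat \<Rightarrow> nat) \<Rightarrow> (nat \<times> nat \<Rightarrow> nat)" where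
  "st lam tau = (\<lambda>(i, j). if (i, j) \<in> boxes lam
      then sorted_list_of_set {tau (i', j) | i'. (i', j) \<in> boxes lam} ! i else 0)"

definition S_k :: "nat list \<Rightarrow> nat \<Rightarrow> (nat \<times> nat \<Rightarrow> nat) set" where
  "S_k lam k = {tau. row_standard lam tau \<and> inv_count lam tau = k}"

definition S_kT :: "nat list \<Rightarrow> nat \<Rightarrow> (nat \<times> nat \<Rightarrow> nat) \<Rightarrow> (nat \<times> nat \<Rightarrow> nat) set" where
  "S_kT lam k T = {tau \<in> S_k lam k. st lam tau = T}"

text \<open>dep of the entry of T in box (i,j).  The subtraction is on nat; it is
  nonnegative for standard Young tableaux.\<close>
definition dep :: "nat list \<Rightarrow> (nat \<times> nat \<Rightarrow> nat) \<Rightarrow> nat \<times> nat \<Rightarrow> nat" where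
  "dep lam T c = (let j = snd c; v = T c in
     card {i'. (i', j) \<in> boxes lam \<and> T (i', j) < v}
     - card {i'. (i', Suc j) \<in> boxes lam \<and> T (i', Suc j) < v})"

definition qint :: "nat \<Rightarrow> int poly" where
  "qint p = (\<Sum>l<p. [:0, 1:] ^ l)"

definition chi :: "nat list \<Rightarrow> (nat \<times> nat \<Rightarrow> nat) \<Rightarrow> int poly" where
  "chi lam T = (\<Sum>k \<le> card (boxes lam) * card (boxes lam).
                  of_nat (card (S_kT lam k T)) * [:0, 1:] ^ k)"

end

theory Submission
  imports Defs
begin

(* Since the entries of a filling are distinct, whether two boxes of column j form an inversion
   pair depends only on column j + 1: the rows must be ordered one way by their entries in column j
   and the other way by their right neighbours, a missing right neighbour counting as larger than
   every entry and larger for lower rows.  The fillings tau with st tau = T are therefore built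
   column by column from the right: given the columns after j, column j is any bijection of its
   rows onto the entries of column j of T lying below these keys.  Summing q^(inversions) over such
   bounded bijections gives a product over the entries v of the column, by placing the largest
   entry first: it may go to any row whose key exceeds it and creates one inversion for every
   larger key.  The factor of v is [#{keys > v} - #{entries > v}]_q, and for a standard tableau
   this number is dep(v) + 1. *)

section \<open>Counting bounded bijections by inversions\<close>

definition qbracket :: "'a::comm_semiring_1 \<Rightarrow> nat \<Rightarrow> 'a" where
  "qbracket x p = (\<Sum>l<p. x ^ l)"

lemma bij_betw_card_greater:
  fixes key :: "'a \<Rightarrow> 'b::linorder"
  assumes "finite S" "inj_on key S"
  shows "bij_betw (\<lambda>s. card {t\<in>S. key s < key t}) S {..<card S}"
proof -
  let ?rank = "\<lambda>s. card {t\<in>S. key s < key t}"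
  have rank_less: "?rank a < ?rank b" if "a \<in> S" "b \<in> S" "key b < key a" for a b
  proof -
    have "{t\<in>S. key a < key t} \<subset> {t\<in>S. key b < key t}"
      using that by auto
    then show ?thesis using assms(1) by (intro psubset_card_mono) auto
  qed
  have inj: "inj_on ?rank S"
  proof (rule inj_onI)
    fix s t assume st: "s \<in> S" "t \<in> S" "?rank s = ?rank t"
    then have "\<not> key s < key t" "\<not> key t < key s"
      using rank_less[of s t] rank_less[of t s] by auto
    then show "s = t" using assms(2) st by (meson inj_onD linorder_neqE)
  qed
  have "?rank s < card S" if "s \<in> S" for s
  proof -
    have "?rank s \<le> card (S - {s})" using assms(1) by (intro card_mono) auto
    also have "\<dots> < card S" using that assms(1) by (metis card_Diff1_less)
    finally show ?thesis .
  qed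
  then have "?rank ` S = {..<card S}"
    using inj by (intro card_subset_eq) (auto simp: card_image)
  then show ?thesis using inj by (simp add: bij_betw_def)
qed

lemma sum_power_card_greater:
  fixes key :: "'a \<Rightarrow> 'b::linorder" and x :: "'c::comm_semiring_1"
  assumes "finite S" "inj_on key S"
  shows "(\<Sum>s\<in>S. x ^ card {t\<in>S. key s < key t}) = qbracket x (card S)"
  unfolding qbracket_def
  using sum.reindex_bij_betw[OF bij_betw_card_greater[OF assms], of "\<lambda>l. x ^ l"] by simp

lemma sum_card_level_sets_power:
  fixes f :: "'a \<Rightarrow> nat" and x :: "'b::comm_semiring_1"
  assumes "finite A" "\<forall>a\<in>A. f a \<le> M"
  shows "(\<Sum>k\<le>M. of_nat (card {a\<in>A. f a = k}) * x ^ k) = (\<Sum>a\<in>A. x ^ f a)"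
proof -
  have "(\<Sum>k\<le>M. of_nat (card {a\<in>A. f a = k}) * x ^ k) = (\<Sum>k\<le>M. \<Sum>a\<in>{a\<in>A. f a = k}. x ^ f a)"
    by simp
  also have "\<dots> = (\<Sum>a\<in>A. x ^ f a)"
    using assms by (intro sum.group) auto
  finally show ?thesis .
qed

definition bounded_bijs :: "'a set \<Rightarrow> nat set \<Rightarrow> ('a \<Rightarrow> nat) \<Rightarrow> ('a \<Rightarrow> nat) set" where
  "bounded_bijs R C key =
     {\<sigma>. bij_betw \<sigma> R C \<and> (\<forall>r. r \<notin> R \<longrightarrow> \<sigma> r = 0) \<and> (\<forall>r\<in>R. \<sigma> r < key r)}"

definition inversions_wrt :: "('a \<Rightarrow> nat) \<Rightarrow> 'a set \<Rightarrow> ('a \<Rightarrow> nat) \<Rightarrow> nat" where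
  "inversions_wrt key R \<sigma> = card {(a, b). a \<in> R \<and> b \<in> R \<and> \<sigma> a < \<sigma> b \<and> key b < key a}"

lemma finite_bounded_bijs:
  assumes "finite R" "finite C"
  shows "finite (bounded_bijs R C key)"
proof (rule finite_subset)
  show "bounded_bijs R C key \<subseteq> {f. \<forall>x. (x \<in> R \<longrightarrow> f x \<in> C) \<and> (x \<notin> R \<longrightarrow> f x = 0)}"
    unfolding bounded_bijs_def by (auto simp: bij_betw_def)
  show "finite {f. \<forall>x. (x \<in> R \<longrightarrow> f x \<in> C) \<and> (x \<notin> R \<longrightarrow> f x = (0::nat))}"
    using assms by (rule finite_set_of_finite_funs)
qed

lemma inversions_wrt_fun_upd_max:
  assumes "r0 \<in> R" "finite R" "\<sigma> ` (R - {r0}) \<subseteq> C" "\<forall>v\<in>C. v < m"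
  shows "inversions_wrt key R (\<sigma>(r0 := m)) =
    inversions_wrt key (R - {r0}) \<sigma> + card {r\<in>R. key r0 < key r}"
proof -
  define P where "P = {(a, b). a \<in> R - {r0} \<and> b \<in> R - {r0} \<and> \<sigma> a < \<sigma> b \<and> key b < key a}"
  define Q where "Q = (\<lambda>a. (a, r0)) ` {r\<in>R. key r0 < key r}"
  have below_m: "\<sigma> a < m" if "a \<in> R" "a \<noteq> r0" for a
    using assms(3,4) that by auto
  have upd_less: "(\<sigma>(r0 := m)) a < (\<sigma>(r0 := m)) b \<longleftrightarrow>
      (a \<noteq> r0 \<and> b = r0) \<or> (a \<noteq> r0 \<and> b \<noteq> r0 \<and> \<sigma> a < \<sigma> b)" if "a \<in> R" "b \<in> R" for a b
    using below_m[OF that(1)] below_m[OF that(2)] by auto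
  have pairs_eq: "{(a, b). a \<in> R \<and> b \<in> R \<and> (\<sigma>(r0 := m)) a < (\<sigma>(r0 := m)) b \<and> key b < key a}
      = P \<union> Q" (is "?L = _")
  proof (rule set_eqI)
    fix p :: "'a \<times> 'a"
    obtain a b where p: "p = (a, b)" by (cases p)
    show "p \<in> ?L \<longleftrightarrow> p \<in> P \<union> Q"
      unfolding p P_def Q_def using assms(1) upd_less[of a b] by (cases "a \<in> R \<and> b \<in> R") auto
  qed
  have "P \<subseteq> R \<times> R" unfolding P_def by auto
  then have "finite P" using assms(2) by (meson finite_SigmaI finite_subset)
  moreover have "finite Q" unfolding Q_def using assms(2) by simp
  moreover have "P \<inter> Q = {}" unfolding P_def Q_def by auto
  ultimately have "card (P \<union> Q) = card P + card Q" by (rule card_Un_disjoint)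
  moreover have "card Q = card {r\<in>R. key r0 < key r}"
    unfolding Q_def by (rule card_image) (auto simp: inj_on_def)
  ultimately show ?thesis unfolding inversions_wrt_def pairs_eq P_def by simp
qed

lemma bij_betw_bounded_bijs_remove_max:
  assumes mC: "m \<in> C" and max: "\<forall>v\<in>C. v \<le> m"
  shows "bij_betw (\<lambda>(r0, \<sigma>). \<sigma>(r0 := m))
     (SIGMA r0:{r\<in>R. m < key r}. bounded_bijs (R - {r0}) (C - {m}) key)
     (bounded_bijs R C key)"
proof -
  let ?S = "SIGMA r0:{r\<in>R. m < key r}. bounded_bijs (R - {r0}) (C - {m}) key"
  let ?ins = "\<lambda>(r0, \<sigma>). \<sigma>(r0 := m)"
  define del where "del \<sigma> = (the_inv_into R \<sigma> m, \<sigma>(the_inv_into R \<sigma> m := 0))" for \<sigma> :: "'a \<Rightarrow> nat"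
  have ins: "?ins p \<in> bounded_bijs R C key \<and> del (?ins p) = p" if p_in: "p \<in> ?S" for p
  proof -
    obtain r0 \<sigma> where p: "p = (r0, \<sigma>)" and r0: "r0 \<in> R" "m < key r0"
      and \<sigma>: "\<sigma> \<in> bounded_bijs (R - {r0}) (C - {m}) key"
      using p_in by (cases p) auto
    have "bij_betw \<sigma> (R - {r0}) (C - {m})"
      using \<sigma> unfolding bounded_bijs_def by auto
    then have "bij_betw (\<sigma>(r0 := m)) (R - {r0}) (C - {m})"
      by (rule bij_betw_cong[THEN iffD1, rotated]) auto
    then have "bij_betw (\<sigma>(r0 := m)) ((R - {r0}) \<union> {r0}) ((C - {m}) \<union> {(\<sigma>(r0 := m)) r0})"
      by (intro notIn_Un_bij_betw) auto
    then have bij: "bij_betw (\<sigma>(r0 := m)) R C"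
      using r0 mC by (simp add: insert_absorb)
    then have "the_inv_into R (\<sigma>(r0 := m)) m = r0"
      using r0 by (metis bij_betw_def fun_upd_same the_inv_into_f_f)
    moreover have "\<sigma> r0 = 0" using \<sigma> unfolding bounded_bijs_def by auto
    ultimately show ?thesis
      using bij \<sigma> r0 p unfolding bounded_bijs_def del_def by auto
  qed
  have del: "del \<sigma> \<in> ?S \<and> ?ins (del \<sigma>) = \<sigma>" if "\<sigma> \<in> bounded_bijs R C key" for \<sigma>
  proof -
    have bij: "bij_betw \<sigma> R C" and zero: "\<forall>r. r \<notin> R \<longrightarrow> \<sigma> r = 0"
      and bound: "\<forall>r\<in>R. \<sigma> r < key r"
      using that unfolding bounded_bijs_def by auto
    define r0 where "r0 = the_inv_into R \<sigma> m"
    have r0: "r0 \<in> R" "\<sigma> r0 = m"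
      unfolding r0_def using bij mC by (auto simp: bij_betw_def the_inv_into_into f_the_inv_into_f)
    have "bij_betw \<sigma> (R - {r0}) (C - {m})"
      using bij r0 unfolding bij_betw_def by (auto simp: inj_on_image_set_diff inj_on_subset inj_on_eq_iff)
    then have "bij_betw (\<sigma>(r0 := 0)) (R - {r0}) (C - {m})"
      by (rule bij_betw_cong[THEN iffD1, rotated]) auto
    then show ?thesis
      using r0 zero bound unfolding del_def r0_def[symmetric] bounded_bijs_def by force
  qed
  show ?thesis
  proof (rule bij_betw_byWitness[where f' = del])
    show "\<forall>p\<in>?S. del (?ins p) = p" "?ins ` ?S \<subseteq> bounded_bijs R C key"
      using ins by blast+
    show "\<forall>\<sigma>\<in>bounded_bijs R C key. ?ins (del \<sigma>) = \<sigma>" "del ` bounded_bijs R C key \<subseteq> ?S"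
      using del by blast+
  qed
qed

lemma sum_bounded_bijs_remove_max:
  fixes x :: "'b::comm_semiring_1"
  assumes fin: "finite R" "finite C" and m: "m \<in> C" "\<forall>v\<in>C. v \<le> m"
  shows "(\<Sum>\<sigma>\<in>bounded_bijs R C key. x ^ inversions_wrt key R \<sigma>) =
    (\<Sum>r0\<in>{r\<in>R. m < key r}. x ^ card {r\<in>R. key r0 < key r} *
       (\<Sum>\<sigma>\<in>bounded_bijs (R - {r0}) (C - {m}) key. x ^ inversions_wrt key (R - {r0}) \<sigma>))"
proof -
  have "(\<Sum>\<sigma>\<in>bounded_bijs R C key. x ^ inversions_wrt key R \<sigma>) =
      (\<Sum>(r0, \<sigma>)\<in>(SIGMA r0:{r\<in>R. m < key r}. bounded_bijs (R - {r0}) (C - {m}) key).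
         x ^ inversions_wrt key R (\<sigma>(r0 := m)))"
    using sum.reindex_bij_betw[OF bij_betw_bounded_bijs_remove_max[OF m], symmetric]
    by (simp add: case_prod_unfold)
  also have "\<dots> = (\<Sum>r0\<in>{r\<in>R. m < key r}. \<Sum>\<sigma>\<in>bounded_bijs (R - {r0}) (C - {m}) key.
      x ^ inversions_wrt key R (\<sigma>(r0 := m)))"
    using fin by (subst sum.Sigma) (auto intro: finite_bounded_bijs)
  also have "\<dots> = (\<Sum>r0\<in>{r\<in>R. m < key r}. \<Sum>\<sigma>\<in>bounded_bijs (R - {r0}) (C - {m}) key.
      x ^ card {r\<in>R. key r0 < key r} * x ^ inversions_wrt key (R - {r0}) \<sigma>)"
  proof (intro sum.cong refl)
    fix r0 \<sigma> assume r0: "r0 \<in> {r\<in>R. m < key r}" and \<sigma>: "\<sigma> \<in> bounded_bijs (R - {r0}) (C - {m}) key"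
    have "\<sigma> ` (R - {r0}) \<subseteq> C - {m}" using \<sigma> by (auto simp: bounded_bijs_def bij_betw_def)
    moreover have "\<forall>v\<in>C - {m}. v < m" using m(2) by force
    ultimately show "x ^ inversions_wrt key R (\<sigma>(r0 := m)) =
        x ^ card {r\<in>R. key r0 < key r} * x ^ inversions_wrt key (R - {r0}) \<sigma>"
      using inversions_wrt_fun_upd_max[of r0 R \<sigma> "C - {m}" m key] r0 fin(1)
      by (simp add: power_add mult.commute)
  qed
  finally show ?thesis by (simp add: sum_distrib_left)
qed

lemma card_greater_Diff_pair:
  fixes key :: "'a \<Rightarrow> 'b::linorder"
  assumes "finite R" "finite C" "r0 \<in> R" "m \<in> C" "v < m" "m < key r0"
  shows "card {r\<in>R - {r0}. v < key r} - card {w\<in>C - {m}. v < w} =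
    card {r\<in>R. v < key r} - card {w\<in>C. v < w}"
proof -
  have "r0 \<in> {r\<in>R. v < key r}" "m \<in> {w\<in>C. v < w}" using assms by auto
  moreover from this(2) have "0 < card {w\<in>C. v < w}"
    using assms(2) by (auto simp: card_gt_0_iff)
  moreover have "{r\<in>R - {r0}. v < key r} = {r\<in>R. v < key r} - {r0}"
    "{w\<in>C - {m}. v < w} = {w\<in>C. v < w} - {m}" by auto
  ultimately show ?thesis using assms(1,2) by (simp add: card_Diff_singleton)
qed

theorem sum_bounded_bijs_inversions:
  fixes x :: "'b::comm_semiring_1"
  assumes "finite R" "finite C" "card R = card C" "inj_on key R"
  shows "(\<Sum>\<sigma>\<in>bounded_bijs R C key. x ^ inversions_wrt key R \<sigma>) =
    (\<Prod>v\<in>C. qbracket x (card {r\<in>R. v < key r} - card {v'\<in>C. v < v'}))"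
  using assms
proof (induction "card C" arbitrary: R C)
  case 0
  then have "R = {}" "C = {}" by auto
  moreover have "bounded_bijs {} {} key = {\<lambda>_. 0}"
    unfolding bounded_bijs_def by (auto simp: bij_betw_def)
  ultimately show ?case by (simp add: inversions_wrt_def)
next
  case (Suc n)
  define m where "m = Max C"
  have "C \<noteq> {}" using Suc.hyps(2) by auto
  then have m: "m \<in> C" "\<forall>v\<in>C. v \<le> m"
    using Suc.prems(2) unfolding m_def by auto
  define R' where "R' = {r\<in>R. m < key r}"
  define factor where "factor v = qbracket x (card {r\<in>R. v < key r} - card {v'\<in>C. v < v'})" for v
  have removed: "(\<Sum>\<sigma>\<in>bounded_bijs (R - {r0}) (C - {m}) key. x ^ inversions_wrt key (R - {r0}) \<sigma>)
      = (\<Prod>v\<in>C - {m}. factor v)" if r0: "r0 \<in> R'" for r0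
  proof -
    have "card (C - {m}) = n" "card (R - {r0}) = card (C - {m})"
      using Suc.hyps(2) Suc.prems m r0 unfolding R'_def by auto
    then have IH: "(\<Sum>\<sigma>\<in>bounded_bijs (R - {r0}) (C - {m}) key. x ^ inversions_wrt key (R - {r0}) \<sigma>)
        = (\<Prod>v\<in>C - {m}. qbracket x (card {r\<in>R - {r0}. v < key r} - card {v'\<in>C - {m}. v < v'}))"
      by (intro Suc.hyps(1)) (use Suc.prems in \<open>auto intro: inj_on_subset\<close>)
    have "v < m" if "v \<in> C - {m}" for v using that m by force
    then show ?thesis
      using card_greater_Diff_pair[OF Suc.prems(1,2) _ m(1)] r0 unfolding IH factor_def R'_def
      by (intro prod.cong) auto
  qed
  have "card {r\<in>R. key r0 < key r} = card {r\<in>R'. key r0 < key r}" if "r0 \<in> R'" for r0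
    using that unfolding R'_def by (metis (lifting) less_trans mem_Collect_eq)
  then have sum_R': "(\<Sum>r0\<in>R'. x ^ card {r\<in>R. key r0 < key r}) = qbracket x (card R')"
    using sum_power_card_greater[of R' key x] Suc.prems(1,4) unfolding R'_def
    by (simp add: inj_on_subset)
  have factor_m: "factor m = qbracket x (card R')"
  proof -
    have "{v'\<in>C. m < v'} = {}" using m(2) by (auto simp: not_less[symmetric])
    then show ?thesis unfolding factor_def R'_def by (simp only: card.empty diff_zero)
  qed
  have "(\<Sum>\<sigma>\<in>bounded_bijs R C key. x ^ inversions_wrt key R \<sigma>) =
      (\<Sum>r0\<in>R'. x ^ card {r\<in>R. key r0 < key r} * (\<Prod>v\<in>C - {m}. factor v))"
    unfolding sum_bounded_bijs_remove_max[OF Suc.prems(1,2) m] R'_def[symmetric]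
    by (intro sum.cong refl) (simp add: removed)
  also have "\<dots> = factor m * (\<Prod>v\<in>C - {m}. factor v)"
    by (simp add: sum_R' factor_m flip: sum_distrib_right)
  also have "\<dots> = (\<Prod>v\<in>C. factor v)" using Suc.prems(2) m by (simp add: prod.remove)
  finally show ?case unfolding factor_def .
qed

section \<open>Columns of a shape and column sorting\<close>

definition col_rows :: "nat list \<Rightarrow> nat \<Rightarrow> nat set" where
  "col_rows lam j = {i. (i, j) \<in> boxes lam}"

definition col_entries :: "nat list \<Rightarrow> (nat \<times> nat \<Rightarrow> nat) \<Rightarrow> nat \<Rightarrow> nat set" where
  "col_entries lam f j = (\<lambda>i. f (i, j)) ` col_rows lam j"

lemma box_column_less_size: "(i, j) \<in> boxes lam \<Longrightarrow> j < size_sh lam"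
  using elem_le_sum_list[of i lam] unfolding boxes_def size_sh_def by auto

lemma finite_boxes: "finite (boxes lam)"
proof (rule finite_subset)
  show "boxes lam \<subseteq> {..<length lam} \<times> {..<size_sh lam}"
    using box_column_less_size by (auto simp: boxes_def)
qed auto

lemma finite_col_rows: "finite (col_rows lam j)"
proof -
  have "col_rows lam j = fst ` (boxes lam \<inter> {c. snd c = j})" unfolding col_rows_def by force
  then show ?thesis using finite_boxes by simp
qed

lemma is_shape_box_above: "is_shape lam \<Longrightarrow> (i, j) \<in> boxes lam \<Longrightarrow> i' \<le> i \<Longrightarrow> (i', j) \<in> boxes lam"
  unfolding is_shape_def boxes_def
  by (auto simp: sorted_wrt_iff_nth_less, metis le_neq_implies_less order_less_le_trans)

lemma col_rows_eq_lessThan: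
  assumes "is_shape lam"
  shows "col_rows lam j = {..<card (col_rows lam j)}"
proof -
  define k where "k = (LEAST i. i \<notin> col_rows lam j)"
  have "\<exists>i. i \<notin> col_rows lam j" using finite_col_rows by (simp add: ex_new_if_finite)
  then have "k \<notin> col_rows lam j" "\<forall>i<k. i \<in> col_rows lam j"
    unfolding k_def by (metis LeastI_ex) (blast dest: not_less_Least)
  then have "col_rows lam j = {..<k}"
    using is_shape_box_above[OF assms] unfolding col_rows_def by (auto simp: not_less[symmetric])
  then show ?thesis by simp
qed

lemma col_entries_filter_card:
  assumes "inj_on (\<lambda>i. f (i, j)) (col_rows lam j)"
  shows "card {w\<in>col_entries lam f j. P w} = card {i\<in>col_rows lam j. P (f (i, j))}"
proof -
  have "{w\<in>col_entries lam f j. P w} = (\<lambda>i. f (i, j)) ` {i\<in>col_rows lam j. P (f (i, j))}"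
    unfolding col_entries_def by auto
  then show ?thesis using assms by (simp add: card_image inj_on_subset)
qed

lemma is_filling_D:
  assumes "is_filling lam tau"
  shows "inj_on tau (boxes lam)" "\<And>c. c \<in> boxes lam \<Longrightarrow> tau c \<le> size_sh lam"
  using assms unfolding is_filling_def bij_betw_def by auto

lemma SYT_D:
  assumes "T \<in> SYT lam"
  shows "bij_betw T (boxes lam) {1..size_sh lam}" "\<And>c. c \<notin> boxes lam \<Longrightarrow> T c = 0"
    "\<And>i j. (i, Suc j) \<in> boxes lam \<Longrightarrow> T (i, j) < T (i, Suc j)"
    "\<And>i j. (Suc i, j) \<in> boxes lam \<Longrightarrow> T (i, j) < T (Suc i, j)"
  using assms unfolding SYT_def row_standard_def is_filling_def by auto

lemma SYT_column_strict_mono: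
  assumes "is_shape lam" "T \<in> SYT lam" "(i', j) \<in> boxes lam" "i < i'"
  shows "T (i, j) < T (i', j)"
  using assms(3,4)
proof (induction i')
  case (Suc k)
  have "(k, j) \<in> boxes lam" using is_shape_box_above[OF assms(1) Suc.prems(1)] by simp
  moreover have "T (k, j) < T (Suc k, j)" using SYT_D(4)[OF assms(2) Suc.prems(1)] .
  ultimately show ?case using Suc by (cases "i = k") auto
qed simp

lemma card_boxes_SYT: "T \<in> SYT lam \<Longrightarrow> card (boxes lam) = size_sh lam"
  using SYT_D(1) bij_betw_same_card by fastforce

lemma inj_on_SYT_col: "T \<in> SYT lam \<Longrightarrow> inj_on (\<lambda>i. T (i, j)) (col_rows lam j)"
  using SYT_D(1) unfolding col_rows_def bij_betw_def inj_on_def by fastforce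

lemma SYT_col_entries_le_size: "T \<in> SYT lam \<Longrightarrow> v \<in> col_entries lam T j \<Longrightarrow> v \<le> size_sh lam"
  using SYT_D(1) unfolding col_entries_def col_rows_def bij_betw_def by fastforce

lemma SYT_col_entries_disjoint:
  "T \<in> SYT lam \<Longrightarrow> j \<noteq> j' \<Longrightarrow> col_entries lam T j \<inter> col_entries lam T j' = {}"
  using SYT_D(1) unfolding col_entries_def col_rows_def bij_betw_def inj_on_def by fastforce

lemma st_col_entries:
  "st lam tau = (\<lambda>(i, j). if (i, j) \<in> boxes lam then sorted_list_of_set (col_entries lam tau j) ! i else 0)"
proof (rule ext, clarify)
  fix i j
  have "{tau (i', j) |i'. (i', j) \<in> boxes lam} = col_entries lam tau j"
    unfolding col_entries_def col_rows_def by auto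
  then show "st lam tau (i, j) =
      (if (i, j) \<in> boxes lam then sorted_list_of_set (col_entries lam tau j) ! i else 0)"
    unfolding st_def by simp
qed

lemma st_cong: "(\<And>j. col_entries lam tau j = col_entries lam tau' j) \<Longrightarrow> st lam tau = st lam tau'"
  unfolding st_col_entries by (rule ext) (simp split: prod.split)

lemma sorted_list_of_col_entries:
  assumes "is_shape lam" "inj_on (\<lambda>i. tau (i, j)) (col_rows lam j)"
    "\<And>i i'. i' \<in> col_rows lam j \<Longrightarrow> i < i' \<Longrightarrow> tau (i, j) < tau (i', j)"
  shows "sorted_list_of_set (col_entries lam tau j) = map (\<lambda>i. tau (i, j)) [0..<card (col_rows lam j)]"
proof -
  let ?h = "card (col_rows lam j)"
  have R: "col_rows lam j = {..<?h}" by (rule col_rows_eq_lessThan[OF assms(1)])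
  let ?l = "map (\<lambda>i. tau (i, j)) [0..<?h]"
  have "sorted_wrt (<) ?l"
    unfolding sorted_wrt_iff_nth_less using assms(3) R by auto
  moreover have "set ?l = col_entries lam tau j" unfolding col_entries_def using R by (metis atLeast_upt set_map)
  moreover have "length ?l = card (col_entries lam tau j)"
    unfolding col_entries_def using card_image[OF assms(2)] by simp
  ultimately show ?thesis using finite_col_rows unfolding col_entries_def
    by (subst sorted_list_of_set_unique[symmetric]) auto
qed

lemma st_SYT:
  assumes "is_shape lam" "T \<in> SYT lam"
  shows "st lam T = T"
proof
  fix c :: "nat \<times> nat"
  obtain i j where c: "c = (i, j)" by (cases c)
  show "st lam T c = T c"
  proof (cases "c \<in> boxes lam")
    case True
    have "i < card (col_rows lam j)"
      using True c col_rows_eq_lessThan[OF assms(1), of j] unfolding col_rows_def by blast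
    then show ?thesis
      using True c sorted_list_of_col_entries[OF assms(1) inj_on_SYT_col[OF assms(2)]]
        SYT_column_strict_mono[OF assms]
      unfolding st_col_entries col_rows_def by auto
  next
    case False
    then show ?thesis unfolding st_col_entries c using SYT_D(2)[OF assms(2)] c by auto
  qed
qed

lemma col_entries_st:
  assumes "is_shape lam" "inj_on (\<lambda>i. tau (i, j)) (col_rows lam j)"
  shows "col_entries lam (st lam tau) j = col_entries lam tau j"
proof -
  let ?L = "sorted_list_of_set (col_entries lam tau j)"
  have len: "length ?L = card (col_rows lam j)"
    unfolding col_entries_def using card_image[OF assms(2)] by simp
  have R: "col_rows lam j = {..<card (col_rows lam j)}" by (rule col_rows_eq_lessThan[OF assms(1)])
  have "col_entries lam (st lam tau) j = (\<lambda>i. ?L ! i) ` col_rows lam j"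
    unfolding col_entries_def st_col_entries col_rows_def by auto
  also have "\<dots> = set ?L" using R len by (metis atLeast_upt map_nth set_map)
  also have "\<dots> = col_entries lam tau j" using finite_col_rows unfolding col_entries_def by simp
  finally show ?thesis .
qed

section \<open>Inversion pairs column by column\<close>

text \<open>A missing right neighbour acts as a key above all entries and larger for lower rows;
  this encodes the tie-break fst c > fst c' in the definition of inversion pairs.\<close>

definition next_col_key :: "nat list \<Rightarrow> (nat \<times> nat \<Rightarrow> nat) \<Rightarrow> nat \<Rightarrow> nat \<Rightarrow> nat" where
  "next_col_key lam tau j i =
     (if (i, Suc j) \<in> boxes lam then tau (i, Suc j) else size_sh lam + 1 + i)"

definition col_inversions :: "nat list \<Rightarrow> (nat \<times> nat \<Rightarrow> nat) \<Rightarrow> nat \<Rightarrow> nat" where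
  "col_inversions lam tau j =
     inversions_wrt (next_col_key lam tau j) (col_rows lam j) (\<lambda>i. tau (i, j))"

definition inv_count_from :: "nat list \<Rightarrow> (nat \<times> nat \<Rightarrow> nat) \<Rightarrow> nat \<Rightarrow> nat" where
  "inv_count_from lam tau j = (\<Sum>j'\<in>{j..<size_sh lam}. col_inversions lam tau j')"

lemma inv_pair_condition_iff_next_col_key:
  assumes shp: "is_shape lam" and fil: "is_filling lam tau"
    and "(a, j) \<in> boxes lam" "(b, j) \<in> boxes lam" "a \<noteq> b"
  shows "(let r = (LEAST r. r \<ge> 1 \<and> (shift (a, j) r \<notin> boxes lam \<or> shift (b, j) r \<notin> boxes lam
                        \<or> tau (shift (a, j) r) \<noteq> tau (shift (b, j) r)))
      in ((shift (a, j) r \<notin> boxes lam \<or> shift (b, j) r \<notin> boxes lam) \<and> a > b)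
         \<or> (shift (a, j) r \<in> boxes lam \<and> shift (b, j) r \<in> boxes lam
            \<and> tau (shift (a, j) r) > tau (shift (b, j) r)))
     \<longleftrightarrow> next_col_key lam tau j b < next_col_key lam tau j a"
proof -
  have sh: "shift (a, j) 1 = (a, Suc j)" "shift (b, j) 1 = (b, Suc j)" unfolding shift_def by auto
  have first: "(LEAST r. r \<ge> 1 \<and> (shift (a, j) r \<notin> boxes lam \<or> shift (b, j) r \<notin> boxes lam
                        \<or> tau (shift (a, j) r) \<noteq> tau (shift (b, j) r))) = 1"
  proof (rule Least_equality)
    have "tau (a, Suc j) \<noteq> tau (b, Suc j)" if "(a, Suc j) \<in> boxes lam" "(b, Suc j) \<in> boxes lam"
      using is_filling_D(1)[OF fil] that \<open>a \<noteq> b\<close> unfolding inj_on_def by blast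
    then show "1 \<ge> (1::nat) \<and> (shift (a, j) 1 \<notin> boxes lam \<or> shift (b, j) 1 \<notin> boxes lam
                        \<or> tau (shift (a, j) 1) \<noteq> tau (shift (b, j) 1))" unfolding sh by auto
  qed simp
  have bound: "tau (i, Suc j) \<le> size_sh lam" if "(i, Suc j) \<in> boxes lam" for i
    using is_filling_D(2)[OF fil that] .
  have mixed: "i < i'" if "(i, Suc j) \<in> boxes lam" "(i', Suc j) \<notin> boxes lam" for i i'
    using is_shape_box_above[OF shp that(1), of i'] that(2) by (metis not_less)
  show ?thesis
    unfolding Let_def first sh next_col_key_def using bound[of a] bound[of b] mixed[of a b] mixed[of b a]
    by (cases "(a, Suc j) \<in> boxes lam"; cases "(b, Suc j) \<in> boxes lam") auto
qed

lemma inv_pairs_eq_col_inversions: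
  assumes "is_shape lam" "is_filling lam tau"
  shows "inv_pairs lam tau = (\<Union>j<size_sh lam. (\<lambda>(a, b). ((a, j), (b, j))) `
    {(a, b). a \<in> col_rows lam j \<and> b \<in> col_rows lam j \<and> tau (a, j) < tau (b, j)
       \<and> next_col_key lam tau j b < next_col_key lam tau j a})"
    (is "_ = (\<Union>j<size_sh lam. ?E j)")
proof (rule set_eqI)
  fix p :: "(nat \<times> nat) \<times> (nat \<times> nat)"
  obtain a j b j' where p: "p = ((a, j), (b, j'))" by (metis prod.collapse)
  have "((a, j), (b, j)) \<in> inv_pairs lam tau \<longleftrightarrow>
      (a, j) \<in> boxes lam \<and> (b, j) \<in> boxes lam \<and> tau (a, j) < tau (b, j)
      \<and> next_col_key lam tau j b < next_col_key lam tau j a"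
    unfolding inv_pairs_def using inv_pair_condition_iff_next_col_key[OF assms, of a j b] by auto
  then show "p \<in> inv_pairs lam tau \<longleftrightarrow> p \<in> (\<Union>j<size_sh lam. ?E j)"
    unfolding p using box_column_less_size[of a j lam]
    by (cases "j = j'") (auto simp: col_rows_def inv_pairs_def)
qed

lemma inv_count_eq_inv_count_from_0:
  assumes "is_shape lam" "is_filling lam tau"
  shows "inv_count lam tau = inv_count_from lam tau 0"
proof -
  define P where "P j = {(a, b). a \<in> col_rows lam j \<and> b \<in> col_rows lam j \<and> tau (a, j) < tau (b, j)
      \<and> next_col_key lam tau j b < next_col_key lam tau j a}" for j
  have "finite (P j)" for j
  proof -
    have "P j \<subseteq> col_rows lam j \<times> col_rows lam j" unfolding P_def by auto
    then show ?thesis using finite_col_rows by (meson finite_SigmaI finite_subset)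
  qed
  then have "inv_count lam tau = (\<Sum>j<size_sh lam. card ((\<lambda>(a, b). ((a, j), (b, j))) ` P j))"
    unfolding inv_count_def inv_pairs_eq_col_inversions[OF assms] P_def[symmetric]
    by (intro card_UN_disjoint) auto
  also have "\<dots> = (\<Sum>j<size_sh lam. card (P j))"
    by (intro sum.cong refl card_image) (auto simp: inj_on_def)
  finally show ?thesis
    unfolding inv_count_from_def col_inversions_def inversions_wrt_def P_def
    by (simp add: atLeast0LessThan)
qed

lemma inv_count_le: "inv_count lam tau \<le> card (boxes lam) * card (boxes lam)"
proof -
  have "inv_pairs lam tau \<subseteq> boxes lam \<times> boxes lam" unfolding inv_pairs_def by auto
  then show ?thesis
    unfolding inv_count_def using finite_boxes card_mono[of "boxes lam \<times> boxes lam"]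
    by (simp add: card_cartesian_product)
qed

section \<open>Filling the columns from right to left\<close>

definition fillings_from :: "nat list \<Rightarrow> (nat \<times> nat \<Rightarrow> nat) \<Rightarrow> nat \<Rightarrow> (nat \<times> nat \<Rightarrow> nat) set" where
  "fillings_from lam T j = {tau. (\<forall>c. (c \<notin> boxes lam \<or> snd c < j) \<longrightarrow> tau c = 0)
     \<and> (\<forall>j'\<ge>j. bij_betw (\<lambda>i. tau (i, j')) (col_rows lam j') (col_entries lam T j'))
     \<and> (\<forall>i j'. j \<le> j' \<longrightarrow> (i, Suc j') \<in> boxes lam \<longrightarrow> tau (i, j') < tau (i, Suc j'))}"

lemma row_standard_st_eq_iff_fillings_from_0:
  assumes shp: "is_shape lam" and TS: "T \<in> SYT lam"
  shows "row_standard lam tau \<and> st lam tau = T \<longleftrightarrow> tau \<in> fillings_from lam T 0"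
proof
  assume "row_standard lam tau \<and> st lam tau = T"
  then have rs: "row_standard lam tau" and stt: "st lam tau = T" by auto
  have fil: "is_filling lam tau" using rs unfolding row_standard_def by auto
  have inj: "inj_on (\<lambda>i. tau (i, j)) (col_rows lam j)" for j
    using is_filling_D(1)[OF fil] unfolding inj_on_def col_rows_def by auto
  have "col_entries lam tau j = col_entries lam T j" for j
    using col_entries_st[OF shp inj, of j] stt by simp
  then have "bij_betw (\<lambda>i. tau (i, j)) (col_rows lam j) (col_entries lam T j)" for j
    using inj unfolding bij_betw_def col_entries_def by metis
  then show "tau \<in> fillings_from lam T 0" using rs fil
    unfolding fillings_from_def row_standard_def is_filling_def by auto
next
  assume "tau \<in> fillings_from lam T 0"
  then have zero: "\<And>c. c \<notin> boxes lam \<Longrightarrow> tau c = 0"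
    and cols: "\<And>j. bij_betw (\<lambda>i. tau (i, j)) (col_rows lam j) (col_entries lam T j)"
    and rows: "\<And>i j. (i, Suc j) \<in> boxes lam \<Longrightarrow> tau (i, j) < tau (i, Suc j)"
    unfolding fillings_from_def by auto
  have same_cols: "col_entries lam tau j = col_entries lam T j" for j
    using cols[of j] unfolding bij_betw_def col_entries_def by simp
  have "f ` boxes lam = (\<Union>j. col_entries lam f j)" for f :: "nat \<times> nat \<Rightarrow> nat"
    unfolding col_entries_def col_rows_def by force
  then have "tau ` boxes lam = {1..size_sh lam}"
    using same_cols SYT_D(1)[OF TS] unfolding bij_betw_def by simp
  moreover from this have "inj_on tau (boxes lam)"
    using card_boxes_SYT[OF TS] finite_boxes by (intro eq_card_imp_inj_on) auto
  ultimately have "is_filling lam tau" unfolding is_filling_def bij_betw_def using zero by auto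
  moreover have "st lam tau = T" using st_cong[OF same_cols] st_SYT[OF shp TS] by simp
  ultimately show "row_standard lam tau \<and> st lam tau = T"
    using rows unfolding row_standard_def by auto
qed

lemma finite_fillings_from:
  assumes "T \<in> SYT lam"
  shows "finite (fillings_from lam T j)"
proof (rule finite_subset)
  show "finite {f. \<forall>c. (c \<in> boxes lam \<longrightarrow> f c \<in> {0..size_sh lam}) \<and> (c \<notin> boxes lam \<longrightarrow> f c = (0::nat))}"
    using finite_boxes by (rule finite_set_of_finite_funs) simp
  have "tau (a, b) \<le> size_sh lam" if "tau \<in> fillings_from lam T j" "(a, b) \<in> boxes lam" for tau a b
  proof (cases "b < j")
    case False
    then have "bij_betw (\<lambda>i. tau (i, b)) (col_rows lam b) (col_entries lam T b)"
      using that(1) unfolding fillings_from_def by auto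
    then have "tau (a, b) \<in> col_entries lam T b"
      using that(2) unfolding bij_betw_def col_rows_def by auto
    then show ?thesis using SYT_col_entries_le_size[OF assms] by auto
  qed (use that in \<open>auto simp: fillings_from_def\<close>)
  then show "fillings_from lam T j \<subseteq>
      {f. \<forall>c. (c \<in> boxes lam \<longrightarrow> f c \<in> {0..size_sh lam}) \<and> (c \<notin> boxes lam \<longrightarrow> f c = 0)}"
    unfolding fillings_from_def by auto
qed

definition put_col :: "nat \<Rightarrow> (nat \<Rightarrow> nat) \<Rightarrow> (nat \<times> nat \<Rightarrow> nat) \<Rightarrow> nat \<times> nat \<Rightarrow> nat" where
  "put_col j \<sigma> tau c = (if snd c = j then \<sigma> (fst c) else tau c)"

lemma put_col_in_fillings_from:
  assumes "tau \<in> fillings_from lam T (Suc j)"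
    and "\<sigma> \<in> bounded_bijs (col_rows lam j) (col_entries lam T j) (next_col_key lam tau j)"
  shows "put_col j \<sigma> tau \<in> fillings_from lam T j"
proof -
  have zero: "\<And>c. c \<notin> boxes lam \<or> snd c < Suc j \<Longrightarrow> tau c = 0"
    and cols: "\<And>j'. j' \<ge> Suc j \<Longrightarrow> bij_betw (\<lambda>i. tau (i, j')) (col_rows lam j') (col_entries lam T j')"
    and rows: "\<And>i j'. Suc j \<le> j' \<Longrightarrow> (i, Suc j') \<in> boxes lam \<Longrightarrow> tau (i, j') < tau (i, Suc j')"
    using assms(1) unfolding fillings_from_def by blast+
  have \<sigma>: "bij_betw \<sigma> (col_rows lam j) (col_entries lam T j)" "\<And>r. r \<notin> col_rows lam j \<Longrightarrow> \<sigma> r = 0"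
    "\<And>r. r \<in> col_rows lam j \<Longrightarrow> \<sigma> r < next_col_key lam tau j r"
    using assms(2) unfolding bounded_bijs_def by auto
  have "put_col j \<sigma> tau c = 0" if "c \<notin> boxes lam \<or> snd c < j" for c
    using that zero[of c] \<sigma>(2)[of "fst c"] unfolding put_col_def col_rows_def by (cases c) auto
  moreover have "bij_betw (\<lambda>i. put_col j \<sigma> tau (i, j')) (col_rows lam j') (col_entries lam T j')"
    if "j' \<ge> j" for j'
    using that \<sigma>(1) cols[of j'] by (cases "j' = j") (simp_all add: put_col_def)
  moreover have "put_col j \<sigma> tau (i, j') < put_col j \<sigma> tau (i, Suc j')"
    if "j \<le> j'" "(i, Suc j') \<in> boxes lam" for i j'
  proof (cases "j' = j")
    case True
    then have "i \<in> col_rows lam j" using that unfolding col_rows_def boxes_def by auto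
    then show ?thesis using \<sigma>(3)[of i] True that unfolding put_col_def next_col_key_def by auto
  next
    case False
    then show ?thesis using rows[of j' i] that unfolding put_col_def by auto
  qed
  ultimately show ?thesis unfolding fillings_from_def by auto
qed

lemma fillings_from_split_col:
  assumes "T \<in> SYT lam" "tau \<in> fillings_from lam T j"
  shows "put_col j (\<lambda>_. 0) tau \<in> fillings_from lam T (Suc j)"
    and "(\<lambda>i. tau (i, j)) \<in>
      bounded_bijs (col_rows lam j) (col_entries lam T j) (next_col_key lam (put_col j (\<lambda>_. 0) tau) j)"
proof -
  have zero: "\<And>c. c \<notin> boxes lam \<or> snd c < j \<Longrightarrow> tau c = 0"
    and cols: "\<And>j'. j' \<ge> j \<Longrightarrow> bij_betw (\<lambda>i. tau (i, j')) (col_rows lam j') (col_entries lam T j')"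
    and rows: "\<And>i j'. j \<le> j' \<Longrightarrow> (i, Suc j') \<in> boxes lam \<Longrightarrow> tau (i, j') < tau (i, Suc j')"
    using assms(2) unfolding fillings_from_def by blast+
  show "put_col j (\<lambda>_. 0) tau \<in> fillings_from lam T (Suc j)"
    using zero cols rows unfolding fillings_from_def put_col_def by (auto simp: less_Suc_eq)
  have "tau (r, j) < next_col_key lam (put_col j (\<lambda>_. 0) tau) j r" if r: "r \<in> col_rows lam j" for r
  proof (cases "(r, Suc j) \<in> boxes lam")
    case False
    have "tau (r, j) \<in> col_entries lam T j" using cols[of j] r unfolding bij_betw_def by auto
    then show ?thesis
      using False SYT_col_entries_le_size[OF assms(1)] unfolding next_col_key_def by fastforce
  qed (use rows[of j r] in \<open>auto simp: next_col_key_def put_col_def\<close>)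
  then show "(\<lambda>i. tau (i, j)) \<in>
      bounded_bijs (col_rows lam j) (col_entries lam T j) (next_col_key lam (put_col j (\<lambda>_. 0) tau) j)"
    using cols[of j] zero unfolding bounded_bijs_def col_rows_def by auto
qed

lemma bij_betw_put_col:
  assumes "T \<in> SYT lam"
  shows "bij_betw (\<lambda>(tau, \<sigma>). put_col j \<sigma> tau)
    (SIGMA tau:fillings_from lam T (Suc j).
       bounded_bijs (col_rows lam j) (col_entries lam T j) (next_col_key lam tau j))
    (fillings_from lam T j)"
proof (rule bij_betw_byWitness[where f' = "\<lambda>tau. (put_col j (\<lambda>_. 0) tau, \<lambda>i. tau (i, j))"])
  have "put_col j (\<lambda>_. 0) (put_col j \<sigma> tau) = tau" if "tau \<in> fillings_from lam T (Suc j)" for tau \<sigma>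
    using that unfolding fillings_from_def put_col_def by (intro ext) auto
  then show "\<forall>p \<in> SIGMA tau:fillings_from lam T (Suc j).
        bounded_bijs (col_rows lam j) (col_entries lam T j) (next_col_key lam tau j).
      (\<lambda>tau. (put_col j (\<lambda>_. 0) tau, \<lambda>i. tau (i, j))) ((\<lambda>(tau, \<sigma>). put_col j \<sigma> tau) p) = p"
    by (auto simp: put_col_def)
  show "\<forall>tau\<in>fillings_from lam T j.
      (\<lambda>(tau, \<sigma>). put_col j \<sigma> tau) ((\<lambda>tau. (put_col j (\<lambda>_. 0) tau, \<lambda>i. tau (i, j))) tau) = tau"
    by (auto simp: put_col_def)
qed (use put_col_in_fillings_from fillings_from_split_col[OF assms] in auto)

lemma inv_count_from_put_col:
  assumes "j < size_sh lam"
  shows "inv_count_from lam (put_col j \<sigma> tau) j =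
    inversions_wrt (next_col_key lam tau j) (col_rows lam j) \<sigma> + inv_count_from lam tau (Suc j)"
proof -
  have key: "next_col_key lam (put_col j \<sigma> tau) j' = next_col_key lam tau j'" if "j' \<ge> j" for j'
    using that unfolding next_col_key_def put_col_def by auto
  have "col_inversions lam (put_col j \<sigma> tau) j = inversions_wrt (next_col_key lam tau j) (col_rows lam j) \<sigma>"
    unfolding col_inversions_def key[OF order_refl] by (simp add: put_col_def)
  moreover have "col_inversions lam (put_col j \<sigma> tau) j' = col_inversions lam tau j'" if "j' > j" for j'
    using that key[of j'] unfolding col_inversions_def by (simp add: put_col_def)
  then have "inv_count_from lam (put_col j \<sigma> tau) (Suc j) = inv_count_from lam tau (Suc j)"
    unfolding inv_count_from_def by (intro sum.cong) auto
  ultimately show ?thesis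
    using assms unfolding inv_count_from_def by (simp add: sum.atLeast_Suc_lessThan)
qed

lemma inj_next_col_key:
  assumes "T \<in> SYT lam" "tau \<in> fillings_from lam T (Suc j)"
  shows "inj (next_col_key lam tau j)"
proof -
  have bij: "bij_betw (\<lambda>r. tau (r, Suc j)) (col_rows lam (Suc j)) (col_entries lam T (Suc j))"
    using assms(2) unfolding fillings_from_def by auto
  have le: "tau (r, Suc j) \<le> size_sh lam" if "(r, Suc j) \<in> boxes lam" for r
    using bij that SYT_col_entries_le_size[OF assms(1)] unfolding bij_betw_def col_rows_def by blast
  show ?thesis
  proof (rule injI)
    fix r r' assume "next_col_key lam tau j r = next_col_key lam tau j r'"
    then show "r = r'"
      using le[of r] le[of r'] bij unfolding next_col_key_def bij_betw_def inj_on_def col_rows_def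
      by (auto split: if_splits)
  qed
qed

lemma card_next_col_key_greater:
  assumes "T \<in> SYT lam" "tau \<in> fillings_from lam T (Suc j)" "v \<in> col_entries lam T j"
  shows "card {r\<in>col_rows lam j. v < next_col_key lam tau j r} =
    card (col_rows lam j) - card {w\<in>col_entries lam T (Suc j). w < v}"
proof -
  have bij: "bij_betw (\<lambda>r. tau (r, Suc j)) (col_rows lam (Suc j)) (col_entries lam T (Suc j))"
    using assms(2) unfolding fillings_from_def by auto
  then have same: "col_entries lam tau (Suc j) = col_entries lam T (Suc j)"
    unfolding bij_betw_def col_entries_def by simp
  have v_le: "v \<le> size_sh lam" using SYT_col_entries_le_size[OF assms(1,3)] .
  have key_ne: "next_col_key lam tau j r \<noteq> v" for r
  proof (cases "(r, Suc j) \<in> boxes lam")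
    case True
    then have "tau (r, Suc j) \<in> col_entries lam T (Suc j)"
      using same unfolding col_entries_def col_rows_def by auto
    then show ?thesis
      using assms(3) SYT_col_entries_disjoint[OF assms(1), of j "Suc j"] True
      unfolding next_col_key_def by auto
  qed (use v_le in \<open>auto simp: next_col_key_def\<close>)
  have "{r\<in>col_rows lam j. v < next_col_key lam tau j r} =
      col_rows lam j - {r\<in>col_rows lam j. next_col_key lam tau j r < v}"
    using key_ne by (auto simp: not_less_iff_gr_or_eq)
  also have "{r\<in>col_rows lam j. next_col_key lam tau j r < v} = {r\<in>col_rows lam (Suc j). tau (r, Suc j) < v}"
    using v_le unfolding next_col_key_def col_rows_def boxes_def by auto
  finally have "{r\<in>col_rows lam j. v < next_col_key lam tau j r} =
      col_rows lam j - {r\<in>col_rows lam (Suc j). tau (r, Suc j) < v}" .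
  moreover have "{r\<in>col_rows lam (Suc j). tau (r, Suc j) < v} \<subseteq> col_rows lam j"
    unfolding col_rows_def boxes_def by auto
  moreover have "card {r\<in>col_rows lam (Suc j). tau (r, Suc j) < v} = card {w\<in>col_entries lam T (Suc j). w < v}"
    using col_entries_filter_card[of tau "Suc j" lam "\<lambda>w. w < v"] bij same
    by (simp add: bij_betw_def)
  ultimately show ?thesis using finite_col_rows by (simp add: card_Diff_subset)
qed

lemma dep_Suc_eq:
  assumes "T \<in> SYT lam" "i \<in> col_rows lam j"
  shows "dep lam T (i, j) + 1 = card (col_rows lam j)
    - card {w\<in>col_entries lam T (Suc j). w < T (i, j)} - card {w\<in>col_entries lam T j. T (i, j) < w}"
proof -
  define v where "v = T (i, j)"
  define below where "below = {r\<in>col_rows lam j. T (r, j) < v}"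
  define above where "above = {r\<in>col_rows lam j. v < T (r, j)}"
  define next_below where "next_below = {r\<in>col_rows lam (Suc j). T (r, Suc j) < v}"
  have "dep lam T (i, j) = card below - card next_below"
    unfolding dep_def Let_def below_def next_below_def v_def col_rows_def by simp
  moreover have "card {w\<in>col_entries lam T (Suc j). w < v} = card next_below"
    "card {w\<in>col_entries lam T j. v < w} = card above"
    unfolding next_below_def above_def by (simp_all add: col_entries_filter_card inj_on_SYT_col[OF assms(1)])
  moreover have "card (col_rows lam j) = card below + 1 + card above"
  proof -
    have "T (r, j) \<noteq> v" if "r \<in> col_rows lam j" "r \<noteq> i" for r
      using inj_on_SYT_col[OF assms(1), of j] that assms(2) unfolding v_def inj_on_def by blast
    then have "r \<in> below \<union> above" if "r \<in> col_rows lam j" "r \<noteq> i" for r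
      using that unfolding below_def above_def by (auto simp: linorder_neq_iff)
    then have "col_rows lam j = insert i (below \<union> above)"
      using assms(2) unfolding below_def above_def by auto
    moreover have "i \<notin> below \<union> above" "below \<inter> above = {}" "finite below" "finite above"
      unfolding below_def above_def v_def using finite_col_rows by auto
    ultimately show ?thesis by (simp add: card_Un_disjoint)
  qed
  moreover have "card next_below \<le> card below"
  proof (rule card_mono)
    show "finite below" unfolding below_def using finite_col_rows by simp
    show "next_below \<subseteq> below"
      using SYT_D(3)[OF assms(1)] unfolding next_below_def below_def col_rows_def boxes_def
      by (fastforce dest: order.strict_trans)
  qed
  ultimately show ?thesis unfolding v_def by linarith
qed

lemma sum_bounded_bijs_col:
  fixes x :: "'a::comm_semiring_1"
  assumes "T \<in> SYT lam" "tau \<in> fillings_from lam T (Suc j)"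
  shows "(\<Sum>\<sigma>\<in>bounded_bijs (col_rows lam j) (col_entries lam T j) (next_col_key lam tau j).
      x ^ inversions_wrt (next_col_key lam tau j) (col_rows lam j) \<sigma>)
    = (\<Prod>i\<in>col_rows lam j. qbracket x (dep lam T (i, j) + 1))"
proof -
  have bij: "bij_betw (\<lambda>i. T (i, j)) (col_rows lam j) (col_entries lam T j)"
    using inj_on_SYT_col[OF assms(1)] unfolding col_entries_def by (rule bij_betw_imageI) simp
  have "(\<Sum>\<sigma>\<in>bounded_bijs (col_rows lam j) (col_entries lam T j) (next_col_key lam tau j).
      x ^ inversions_wrt (next_col_key lam tau j) (col_rows lam j) \<sigma>)
    = (\<Prod>v\<in>col_entries lam T j. qbracket x
        (card {r\<in>col_rows lam j. v < next_col_key lam tau j r} - card {w\<in>col_entries lam T j. v < w}))"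
    using finite_col_rows bij_betw_finite[OF bij] bij_betw_same_card[OF bij]
      inj_next_col_key[OF assms] by (intro sum_bounded_bijs_inversions) (auto intro: inj_on_subset)
  also have "\<dots> = (\<Prod>i\<in>col_rows lam j. qbracket x
        (card {r\<in>col_rows lam j. T (i, j) < next_col_key lam tau j r} - card {w\<in>col_entries lam T j. T (i, j) < w}))"
    by (rule prod.reindex_bij_betw[OF bij, symmetric])
  also have "\<dots> = (\<Prod>i\<in>col_rows lam j. qbracket x (dep lam T (i, j) + 1))"
  proof (intro prod.cong refl)
    fix i assume i: "i \<in> col_rows lam j"
    then have "T (i, j) \<in> col_entries lam T j" unfolding col_entries_def by auto
    then show "qbracket x (card {r\<in>col_rows lam j. T (i, j) < next_col_key lam tau j r}
        - card {w\<in>col_entries lam T j. T (i, j) < w}) = qbracket x (dep lam T (i, j) + 1)"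
      using card_next_col_key_greater[OF assms] dep_Suc_eq[OF assms(1) i] by simp
  qed
  finally show ?thesis .
qed

lemma sum_fillings_from_Suc:
  fixes x :: "'a::comm_semiring_1"
  assumes "T \<in> SYT lam" "j < size_sh lam"
  shows "(\<Sum>tau\<in>fillings_from lam T j. x ^ inv_count_from lam tau j) =
    (\<Prod>i\<in>col_rows lam j. qbracket x (dep lam T (i, j) + 1)) *
    (\<Sum>tau\<in>fillings_from lam T (Suc j). x ^ inv_count_from lam tau (Suc j))"
proof -
  let ?B = "\<lambda>tau. bounded_bijs (col_rows lam j) (col_entries lam T j) (next_col_key lam tau j)"
  let ?P = "\<Prod>i\<in>col_rows lam j. qbracket x (dep lam T (i, j) + 1)"
  have "(\<Sum>tau\<in>fillings_from lam T j. x ^ inv_count_from lam tau j) =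
      (\<Sum>(tau, \<sigma>)\<in>(SIGMA tau:fillings_from lam T (Suc j). ?B tau). x ^ inv_count_from lam (put_col j \<sigma> tau) j)"
    using sum.reindex_bij_betw[OF bij_betw_put_col[OF assms(1)], symmetric]
    by (simp add: case_prod_unfold)
  also have "\<dots> = (\<Sum>tau\<in>fillings_from lam T (Suc j). \<Sum>\<sigma>\<in>?B tau.
      x ^ inversions_wrt (next_col_key lam tau j) (col_rows lam j) \<sigma> * x ^ inv_count_from lam tau (Suc j))"
    using finite_fillings_from[OF assms(1)] finite_col_rows
    by (subst sum.Sigma) (auto intro!: finite_bounded_bijs
        simp: inv_count_from_put_col[OF assms(2)] power_add col_entries_def)
  also have "\<dots> = (\<Sum>tau\<in>fillings_from lam T (Suc j). ?P * x ^ inv_count_from lam tau (Suc j))"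
    by (intro sum.cong refl) (simp add: sum_bounded_bijs_col[OF assms(1)] flip: sum_distrib_right)
  finally show ?thesis by (simp add: sum_distrib_left)
qed

lemma sum_fillings_from:
  fixes x :: "'a::comm_semiring_1"
  assumes "T \<in> SYT lam"
  shows "j \<le> size_sh lam \<Longrightarrow> (\<Sum>tau\<in>fillings_from lam T j. x ^ inv_count_from lam tau j) =
    (\<Prod>j'\<in>{j..<size_sh lam}. \<Prod>i\<in>col_rows lam j'. qbracket x (dep lam T (i, j') + 1))"
proof (induction "size_sh lam - j" arbitrary: j)
  case 0
  then have j: "j = size_sh lam" by simp
  have "fillings_from lam T j = {\<lambda>_. 0}"
  proof
    have "c \<notin> boxes lam \<or> snd c < j" for c using box_column_less_size j by (cases c) auto
    then show "fillings_from lam T j \<subseteq> {\<lambda>_. 0}" unfolding fillings_from_def by auto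
    have "col_rows lam j' = {}" if "j' \<ge> j" for j'
      using box_column_less_size j that unfolding col_rows_def by fastforce
    then show "{\<lambda>_. 0} \<subseteq> fillings_from lam T j"
      unfolding fillings_from_def col_entries_def using j by (auto simp: bij_betw_def dest: box_column_less_size)
  qed
  then show ?case using j unfolding inv_count_from_def by simp
next
  case (Suc d)
  then have j: "j < size_sh lam" by simp
  have "(\<Sum>tau\<in>fillings_from lam T (Suc j). x ^ inv_count_from lam tau (Suc j)) =
    (\<Prod>j'\<in>{Suc j..<size_sh lam}. \<Prod>i\<in>col_rows lam j'. qbracket x (dep lam T (i, j') + 1))"
    using Suc by simp
  then show ?case
    unfolding sum_fillings_from_Suc[OF assms j] using j by (simp add: prod.atLeast_Suc_lessThan)
qed

lemma prod_boxes_by_columns: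
  "(\<Prod>c\<in>boxes lam. f c) = (\<Prod>j\<in>{0..<size_sh lam}. \<Prod>i\<in>col_rows lam j. f (i, j))"
proof -
  have "boxes lam = (\<lambda>(j, i). (i, j)) ` Sigma {0..<size_sh lam} (col_rows lam)"
    unfolding col_rows_def using box_column_less_size by force
  then have "(\<Prod>c\<in>boxes lam. f c) = (\<Prod>(j, i)\<in>Sigma {0..<size_sh lam} (col_rows lam). f (i, j))"
    by (simp add: prod.reindex inj_on_def case_prod_unfold)
  also have "\<dots> = (\<Prod>j\<in>{0..<size_sh lam}. \<Prod>i\<in>col_rows lam j. f (i, j))"
    using finite_col_rows by (subst prod.Sigma) auto
  finally show ?thesis .
qed

theorem mainTheorem3:
  assumes "is_shape lam" and "T \<in> SYT lam"
  shows "chi lam T = (\<Prod>c \<in> boxes lam. qint (dep lam T c + 1))"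
proof -
  let ?F = "fillings_from lam T 0" and ?q = "[:0, 1:] :: int poly"
  have "S_kT lam k T = {tau\<in>?F. inv_count lam tau = k}" for k
    unfolding S_kT_def S_k_def using row_standard_st_eq_iff_fillings_from_0[OF assms] by blast
  then have "chi lam T = (\<Sum>tau\<in>?F. ?q ^ inv_count lam tau)"
    unfolding chi_def using finite_fillings_from[OF assms(2)] inv_count_le
    by (simp add: sum_card_level_sets_power)
  also have "\<dots> = (\<Sum>tau\<in>?F. ?q ^ inv_count_from lam tau 0)"
  proof (intro sum.cong refl)
    fix tau assume "tau \<in> ?F"
    then have "is_filling lam tau"
      using row_standard_st_eq_iff_fillings_from_0[OF assms] unfolding row_standard_def by blast
    then show "?q ^ inv_count lam tau = ?q ^ inv_count_from lam tau 0"
      by (simp add: inv_count_eq_inv_count_from_0[OF assms(1)])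
  qed
  also have "\<dots> = (\<Prod>c\<in>boxes lam. qbracket ?q (dep lam T c + 1))"
    unfolding prod_boxes_by_columns by (rule sum_fillings_from[OF assms(2)]) simp
  finally show ?thesis unfolding qint_def qbracket_def .
qed

end
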